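(* Let $T\in V$ be a target variable. If $0<\zeta_T<n$ and the family $\{\Upsilon_1\setminus\{T\},\dots,\Upsilon_n\setminus\{T\}\}$ is not conservative, then $pa(T)\subseteq\bigcup_{i=1}^{n}MB_i(T)\subseteq MB(T)$.
   Context: Let $G=(V,E)$ be a DAG (causal Bayesian network) over a finite set $V$ of random variables with joint distribution $P$ satisfying the Markov condition with respect to $G$; causal sufficiency is assumed. For $X\in V$, $pa(X)$ and $ch(X)$ are the parents and children of $X$ in $G$, $sp(X)=\big(\bigcup_{Y\in ch(X)}pa(Y)\big)\setminus\{X\}$ is the set of spouses, and $MB(X)=pa(X)\cup ch(X)\cup sp(X)$ is the Markov blanket. There are $n\ge 1$ intervention experiments; in the $i$-th, the set $\Upsilon_i\subseteq V$ (possibly empty) is manipulated. The post-intervention DAG is $G_i=(V,E_i)$ with $E_i=\{(a,b)\in E: b\notin\Upsilon_i\}$, with distribution $P_i(V)=\prod_{V_j\notin\Upsilon_i}P(V_j\mid pa(V_j))\prod_{V_j\in\Upsilon_i}P_i(V_j)$, and $D_i$ is a dataset drawn from $P_i$. It is assumed that each $P_i$ is faithful to $G_i$ and that conditional independence tests on $D_i$ are reliable (return exactly the conditional independences of $P_i$). $MB_i(T)$ denotes the Markov blanket of $T$ found in $D_i$, i.e. the set of parents, children and spouses of $T$ in $G_i$. $\zeta_T=|\{i:T\in\Upsilon_i\}|$. A family $\{A_1,\dots,A_n\}$ of subsets of $V$ is called conservative if for every $V_j\in\bigcup_{i=1}^n A_i$ there exists $i$ with $V_j\notin A_i$. *)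

theory Defs
  imports Main
begin

(* A DAG over vertex set V is given by an edge relation E \<subseteq> V \<times> V with acyclic E.
   (a,b) \<in> E means a \<rightarrow> b. *)

definition dag :: "'v set \<Rightarrow> ('v \<times> 'v) set \<Rightarrow> bool" where
  "dag V E \<longleftrightarrow> finite V \<and> E \<subseteq> V \<times> V \<and> acyclic E"

definition pa :: "('v \<times> 'v) set \<Rightarrow> 'v \<Rightarrow> 'v set" where
  "pa E X = {Y. (Y, X) \<in> E}"

definition ch :: "('v \<times> 'v) set \<Rightarrow> 'v \<Rightarrow> 'v set" where
  "ch E X = {Y. (X, Y) \<in> E}"

definition sp :: "('v \<times> 'v) set \<Rightarrow> 'v \<Rightarrow> 'v set" where
  "sp E X = (\<Union>Y\<in>ch E X. pa E Y) - {X}"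

definition MB :: "('v \<times> 'v) set \<Rightarrow> 'v \<Rightarrow> 'v set" where
  "MB E X = pa E X \<union> ch E X \<union> sp E X"

(* edges of the post-intervention DAG G_i: incoming edges of manipulated variables removed *)
definition intervened_edges :: "('v \<times> 'v) set \<Rightarrow> 'v set \<Rightarrow> ('v \<times> 'v) set" where
  "intervened_edges E U = {(a, b) \<in> E. b \<notin> U}"

definition MB_int :: "('v \<times> 'v) set \<Rightarrow> (nat \<Rightarrow> 'v set) \<Rightarrow> nat \<Rightarrow> 'v \<Rightarrow> 'v set" where
  "MB_int E \<Upsilon> i T = MB (intervened_edges E (\<Upsilon> i)) T"

definition zeta :: "nat \<Rightarrow> (nat \<Rightarrow> 'v set) \<Rightarrow> 'v \<Rightarrow> nat" where
  "zeta n \<Upsilon> T = card {i \<in> {1..n}. T \<in> \<Upsilon> i}"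

definition conservative :: "nat \<Rightarrow> (nat \<Rightarrow> 'v set) \<Rightarrow> bool" where
  "conservative n A \<longleftrightarrow> (\<forall>v \<in> (\<Union>i\<in>{1..n}. A i). \<exists>i\<in>{1..n}. v \<notin> A i)"

end

theory Submission
  imports Defs
begin

(* Removing edges can only shrink a Markov blanket, so every MB_i(T) lies in MB(T).
   Since zeta_T < n, some experiment leaves T unmanipulated; there all edges into T
   survive, so pa(T) is contained in that MB_i(T). *)

lemma MB_mono: "E' \<subseteq> E \<Longrightarrow> MB E' X \<subseteq> MB E X"
  unfolding MB_def pa_def ch_def sp_def by blast

lemma pa_subset_MB: "pa E X \<subseteq> MB E X"
  unfolding MB_def by blast

lemma intervened_edges_subset: "intervened_edges E U \<subseteq> E"
  unfolding intervened_edges_def by blast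

lemma pa_intervened_edges: "X \<notin> U \<Longrightarrow> pa (intervened_edges E U) X = pa E X"
  unfolding pa_def intervened_edges_def by blast

lemma MB_int_subset_MB: "MB_int E \<Upsilon> i X \<subseteq> MB E X"
  unfolding MB_int_def by (rule MB_mono[OF intervened_edges_subset])

lemma pa_subset_MB_int:
  assumes "X \<notin> \<Upsilon> i"
  shows "pa E X \<subseteq> MB_int E \<Upsilon> i X"
proof -
  have "pa E X = pa (intervened_edges E (\<Upsilon> i)) X"
    using assms by (simp add: pa_intervened_edges)
  also have "\<dots> \<subseteq> MB_int E \<Upsilon> i X"
    unfolding MB_int_def by (rule pa_subset_MB)
  finally show ?thesis .
qed

lemma zeta_less_imp_unmanipulated:
  assumes "zeta n \<Upsilon> X < n"
  obtains i where "i \<in> {1..n}" "X \<notin> \<Upsilon> i"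
proof -
  have "{i \<in> {1..n}. X \<in> \<Upsilon> i} \<noteq> {1..n}"
    using assms unfolding zeta_def by auto
  then show thesis using that by blast
qed

theorem theorem6:
  fixes V :: "'v set" and E :: "('v \<times> 'v) set" and n :: nat
    and \<Upsilon> :: "nat \<Rightarrow> 'v set" and T :: 'v
  assumes "dag V E"
    and "n \<ge> 1"
    and "\<forall>i\<in>{1..n}. \<Upsilon> i \<subseteq> V"
    and "T \<in> V"
    and "0 < zeta n \<Upsilon> T" and "zeta n \<Upsilon> T < n"
    and "\<not> conservative n (\<lambda>i. \<Upsilon> i - {T})"
  shows "pa E T \<subseteq> (\<Union>i\<in>{1..n}. MB_int E \<Upsilon> i T)
       \<and> (\<Union>i\<in>{1..n}. MB_int E \<Upsilon> i T) \<subseteq> MB E T"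
proof
  obtain i where i: "i \<in> {1..n}" "T \<notin> \<Upsilon> i"
    using zeta_less_imp_unmanipulated[OF assms(6)] .
  then show "pa E T \<subseteq> (\<Union>i\<in>{1..n}. MB_int E \<Upsilon> i T)"
    using pa_subset_MB_int[of T \<Upsilon> i E] by blast
next
  show "(\<Union>i\<in>{1..n}. MB_int E \<Upsilon> i T) \<subseteq> MB E T"
    by (intro UN_least MB_int_subset_MB)
qed

end
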